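(* Let $m$ be a positive integer and, for complex $\alpha$, let \[ I(\alpha,m) = m \int_{0}^{\infty} y^{\alpha} e^{-y} (1-e^{-y})^{m-1} \, dy, \qquad y^{\alpha}=e^{\alpha\log y}. \] (i) If $\alpha\in\mathbb{C}$ is not a nonpositive integer and $\operatorname{Re}(m+\alpha)>0$, then the integral $I(\alpha,m)$ converges and \[ I(\alpha,m) = \Gamma(\alpha+1) \sum_{k = 1}^{m} (-1)^{k-1} \binom{m}{k} \frac{1}{k^{\alpha}}. \] (ii) If $n\in\{1,2,\dots,m-1\}$, then \[ I(-n,m) = \frac{(-1)^{n-1}}{(n-1)!} \sum_{k = 1}^{m} (-1)^{k} \binom{m}{k} k^{n} \log{k}. \] (iii) Moreover, \[ \frac{\partial I}{\partial\alpha}(0,m) = m\int_{0}^{\infty} e^{-y}(1-e^{-y})^{m-1}\log{y} \, dy = -\gamma - \sum_{k = 1}^{m} (-1)^{k-1} \binom{m}{k} \log{k}, \] where $\gamma=-\Gamma'(1)$ is the Euler--Mascheroni constant.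
   Context: $\Gamma$ denotes the Gamma function. *)

theory Defs
  imports "HOL-Analysis.Analysis"
begin

definition I_integrand :: "complex \<Rightarrow> nat \<Rightarrow> real \<Rightarrow> complex" where
  "I_integrand \<alpha> m y =
     (complex_of_real y) powr \<alpha> * complex_of_real (exp (- y)) * complex_of_real ((1 - exp (- y)) ^ (m - 1))"

definition I_fun :: "complex \<Rightarrow> nat \<Rightarrow> complex" where
  "I_fun \<alpha> m = of_nat m * (LINT y:{0<..}|lborel. I_integrand \<alpha> m y)"

end

(*
  For Re alpha > -1, expanding (1 - e^-y)^(m-1) binomially turns I(alpha,m) into a finite
  combination of rescaled Gamma integrals,
    int_0^oo y^alpha e^(-(j+1)y) dy = Gamma(alpha+1) (j+1)^(-alpha-1),
  and m C(m-1,j) / (j+1) = C(m,j+1) gives I(alpha,m) = Gamma(alpha+1) S(alpha) with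
  S(alpha) = sum_k (-1)^(k-1) C(m,k) k^(-alpha). Since the weight is O(y^(m-1)) at 0, the integral
  is holomorphic on Re alpha > -m (differentiation under the integral sign), so the identity
  extends by analytic continuation to this half-plane minus the poles of Gamma(alpha+1).
  At alpha = -n with 1 <= n < m the left side stays finite while Gamma(alpha+1) has a simple
  pole with residue (-1)^(n-1)/(n-1)!; hence S(-n) = 0 and I(-n,m) is that residue times S'(-n).
  Differentiating I = Gamma(alpha+1) S(alpha) at 0, where S(0) = 1 and Gamma'(1) = -gamma,
  gives (iii).
*)

theory Submission
  imports Defs "HOL-Complex_Analysis.Complex_Analysis"
begin

lemma powr_le_powr_add_powr:
  fixes y c d t :: real
  assumes "y > 0" "\<bar>t - c\<bar> \<le> d"
  shows "y powr t \<le> y powr (c - d) + y powr (c + d)"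
proof (cases "y \<ge> 1")
  case True
  then have "y powr t \<le> y powr (c + d)"
    using assms by (intro powr_mono) auto
  then show ?thesis by (simp add: add_increasing)
next
  case False
  then have "y powr t \<le> y powr (c - d)"
    using assms by (intro powr_mono') auto
  then show ?thesis by (simp add: add_increasing2)
qed

lemma abs_ln_le_powr_add_powr:
  fixes y d :: real
  assumes "y > 0" "d > 0"
  shows "d * \<bar>ln y\<bar> \<le> y powr d + y powr (- d)"
proof -
  have "d * \<bar>ln y\<bar> \<le> exp (d * \<bar>ln y\<bar>)"
    using exp_ge_add_one_self[of "d * \<bar>ln y\<bar>"] by linarith
  also have "\<dots> \<le> exp (d * ln y) + exp (- d * ln y)"
    by (cases "ln y \<ge> 0") (auto simp: add_increasing add_increasing2)
  finally show ?thesis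
    using assms by (simp add: powr_def)
qed

lemma norm_of_real_powr_diff_le:
  fixes y d :: real and z a :: complex
  assumes y: "y > 0" and d: "d > 0" and z: "z \<in> cball a d"
  shows "norm (of_real y powr z - of_real y powr a) \<le>
           (2 * y powr Re a + y powr (Re a - 2 * d) + y powr (Re a + 2 * d)) / d * norm (z - a)"
proof -
  define B where "B = \<bar>ln y\<bar> * (y powr (Re a - d) + y powr (Re a + d))"
  have deriv: "((\<lambda>w. of_real y powr w) has_field_derivative Ln (of_real y) * of_real y powr w)
                 (at w within cball a d)" for w
    using y by (intro has_field_derivative_at_within[OF has_field_derivative_powr_right]) simp
  have bound: "norm (Ln (of_real y) * of_real y powr w) \<le> B" if "w \<in> cball a d" for w
  proof -
    have "\<bar>Re w - Re a\<bar> \<le> d"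
      using that abs_Re_le_cmod[of "w - a"] by (auto simp: dist_norm norm_minus_commute)
    then have "y powr Re w \<le> y powr (Re a - d) + y powr (Re a + d)"
      using y by (intro powr_le_powr_add_powr)
    then show ?thesis
      using y unfolding B_def by (simp add: norm_mult Ln_of_real norm_powr_real_powr mult_left_mono)
  qed
  have "B \<le> (y powr d + y powr (- d)) / d * (y powr (Re a - d) + y powr (Re a + d))"
    unfolding B_def using abs_ln_le_powr_add_powr[OF y d] d
    by (intro mult_right_mono) (auto simp: field_simps)
  also have "\<dots> = (2 * y powr Re a + y powr (Re a - 2 * d) + y powr (Re a + 2 * d)) / d"
  proof -
    have "y powr d * y powr (Re a - d) = y powr Re a" "y powr (- d) * y powr (Re a + d) = y powr Re a"
      "y powr (- d) * y powr (Re a - d) = y powr (Re a - 2 * d)"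
      "y powr d * y powr (Re a + d) = y powr (Re a + 2 * d)"
      by (simp_all add: algebra_simps flip: powr_add)
    then show ?thesis
      by (simp add: distrib_left distrib_right add_divide_distrib)
  qed
  finally have B: "B \<le> (2 * y powr Re a + y powr (Re a - 2 * d) + y powr (Re a + 2 * d)) / d" .
  have "norm (of_real y powr z - of_real y powr a) \<le> B * norm (z - a)"
    by (rule field_differentiable_bound[OF convex_cball deriv bound z]) (use d in auto)
  also have "\<dots> \<le> (2 * y powr Re a + y powr (Re a - 2 * d) + y powr (Re a + 2 * d)) / d * norm (z - a)"
    using B by (rule mult_right_mono) simp
  finally show ?thesis .
qed

lemma has_field_derivative_inverse_powr_right:
  fixes w :: complex
  assumes "w \<noteq> 0"
  shows "((\<lambda>z. 1 / w powr z) has_field_derivative - Ln w / w powr a) (at a)"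
  using assms by (auto intro!: derivative_eq_intros simp: power2_eq_square)

section \<open>Differentiation under the integral sign\<close>

lemma set_integral_sum:
  fixes f :: "'i \<Rightarrow> 'a \<Rightarrow> 'b::{banach, second_countable_topology}"
  assumes "\<And>i. i \<in> I \<Longrightarrow> set_integrable M A (f i)"
  shows "(LINT x:A|M. \<Sum>i\<in>I. f i x) = (\<Sum>i\<in>I. LINT x:A|M. f i x)"
  using assms unfolding set_integrable_def set_lebesgue_integral_def
  by (simp add: scaleR_sum_right integral_sum)

lemma has_field_derivative_set_integral_dominated:
  fixes F :: "complex \<Rightarrow> 'a \<Rightarrow> complex"
  assumes r: "r > 0"
    and integrable: "\<And>z. z \<in> ball a r \<Longrightarrow> set_integrable M A (F z)"
    and deriv: "\<And>x. x \<in> A \<Longrightarrow> ((\<lambda>z. F z x) has_field_derivative F' x) (at a)"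
    and F'_measurable: "set_borel_measurable M A F'"
    and W_integrable: "set_integrable M A W"
    and lipschitz: "\<And>z x. z \<in> ball a r \<Longrightarrow> x \<in> A \<Longrightarrow> norm (F z x - F a x) \<le> W x * norm (z - a)"
  shows "((\<lambda>z. set_lebesgue_integral M A (F z)) has_field_derivative set_lebesgue_integral M A F')
           (at a)"
proof -
  let ?Q = "\<lambda>z x. indicator A x *\<^sub>R ((F z x - F a x) / (z - a))"
  have "((\<lambda>z. (set_lebesgue_integral M A (F z) - set_lebesgue_integral M A (F a)) / (z - a))
          \<longlongrightarrow> set_lebesgue_integral M A F') (at a within ball a r)"
    unfolding tendsto_at_iff_sequentially
  proof (intro allI impI)
    fix X :: "nat \<Rightarrow> complex"
    assume X: "\<forall>i. X i \<in> ball a r - {a}" and "X \<longlonglongrightarrow> a"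
    then have X_at: "filterlim X (at a) sequentially"
      by (intro filterlim_atI) auto
    have quotient: "(set_lebesgue_integral M A (F (X i)) - set_lebesgue_integral M A (F a)) / (X i - a)
                      = integral\<^sup>L M (?Q (X i))" for i
    proof -
      have "(set_lebesgue_integral M A (F (X i)) - set_lebesgue_integral M A (F a)) / (X i - a)
              = (LINT x:A|M. F (X i) x - F a x) / (X i - a)"
        using integrable[of "X i"] integrable[of a] X r by (subst set_integral_diff(2)) auto
      also have "\<dots> = (LINT x:A|M. (F (X i) x - F a x) / (X i - a))"
        by (rule set_integral_divide_zero[symmetric])
      finally show ?thesis
        unfolding set_lebesgue_integral_def .
    qed
    have "(\<lambda>i. integral\<^sup>L M (?Q (X i))) \<longlonglongrightarrow> integral\<^sup>L M (\<lambda>x. indicator A x *\<^sub>R F' x)"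
    proof (rule integral_dominated_convergence[where w = "\<lambda>x. indicator A x *\<^sub>R W x"])
      show "(\<lambda>x. indicator A x *\<^sub>R F' x) \<in> borel_measurable M"
        using F'_measurable by (simp add: set_borel_measurable_def)
      show "?Q (X i) \<in> borel_measurable M" for i
      proof -
        have "set_integrable M A (\<lambda>x. (F (X i) x - F a x) / (X i - a))"
          using integrable[of "X i"] integrable[of a] X r
          by (intro set_integrable_divide set_integral_diff(1)) auto
        then show ?thesis
          unfolding set_integrable_def by (rule borel_measurable_integrable)
      qed
      show "integrable M (\<lambda>x. indicator A x *\<^sub>R W x)"
        using W_integrable by (simp add: set_integrable_def)
      show "AE x in M. (\<lambda>i. ?Q (X i) x) \<longlonglongrightarrow> indicator A x *\<^sub>R F' x"
      proof (intro AE_I2)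
        fix x
        show "(\<lambda>i. ?Q (X i) x) \<longlonglongrightarrow> indicator A x *\<^sub>R F' x"
        proof (cases "x \<in> A")
          case True
          have "((\<lambda>z. (F z x - F a x) / (z - a)) \<longlongrightarrow> F' x) (at a)"
            using deriv[OF True] unfolding has_field_derivative_iff .
          from filterlim_compose[OF this X_at] True show ?thesis
            by (simp add: o_def)
        qed simp
      qed
      show "AE x in M. norm (?Q (X i) x) \<le> indicator A x *\<^sub>R W x" for i
      proof (intro AE_I2)
        fix x
        have Xi: "X i \<in> ball a r" "X i \<noteq> a"
          using X by auto
        show "norm (?Q (X i) x) \<le> indicator A x *\<^sub>R W x"
        proof (cases "x \<in> A")
          case True
          then have "norm ((F (X i) x - F a x) / (X i - a)) \<le> W x"
            using lipschitz[OF Xi(1) True] Xi(2) by (simp add: norm_divide divide_le_eq)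
          then show ?thesis
            using True by simp
        qed simp
      qed
    qed
    then show "((\<lambda>z. (set_lebesgue_integral M A (F z) - set_lebesgue_integral M A (F a)) / (z - a)) \<circ> X)
                 \<longlonglongrightarrow> set_lebesgue_integral M A F'"
      unfolding o_def quotient by (simp add: set_lebesgue_integral_def)
  qed
  moreover have "at a within ball a r = at a"
    using r by (intro at_within_open) auto
  ultimately show ?thesis
    unfolding has_field_derivative_iff by (simp only:)
qed

section \<open>Limits at poles\<close>

lemma limit_0_if_pole_mult_tendsto:
  fixes f g :: "'a \<Rightarrow> 'b::real_normed_field"
  assumes "F \<noteq> bot" and pole: "filterlim g at_infinity F" and f: "(f \<longlongrightarrow> c) F"
    and "((\<lambda>x. g x * f x) \<longlongrightarrow> L) F"
  shows "c = 0"
proof (rule ccontr)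
  assume "c \<noteq> 0"
  from f \<open>c \<noteq> 0\<close> pole have "filterlim (\<lambda>x. f x * g x) at_infinity F"
    by (rule tendsto_mult_filterlim_at_infinity)
  then have "filterlim (\<lambda>x. g x * f x) at_infinity F"
    by (simp add: mult.commute)
  with assms(1,4) show False
    by (rule not_tendsto_and_filterlim_at_infinity)
qed

lemma tendsto_mult_at_simple_pole:
  fixes g h :: "complex \<Rightarrow> complex"
  assumes residue: "((\<lambda>x. g x * (x - z)) \<longlongrightarrow> c) (at z)"
    and h: "(h has_field_derivative h') (at z)" "h z = 0"
  shows "((\<lambda>x. g x * h x) \<longlongrightarrow> c * h') (at z)"
proof -
  have "((\<lambda>x. h x / (x - z)) \<longlongrightarrow> h') (at z)"
    using h unfolding has_field_derivative_iff by simp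
  with residue have "((\<lambda>x. g x * (x - z) * (h x / (x - z))) \<longlongrightarrow> c * h') (at z)"
    by (rule tendsto_mult)
  moreover have "eventually (\<lambda>x. g x * (x - z) * (h x / (x - z)) = g x * h x) (at z)"
    by (auto simp: eventually_at_filter)
  ultimately show ?thesis
    by (rule Lim_transform_eventually)
qed

lemma eventually_not_in_nonpos_Ints_at_neg_nat:
  "eventually (\<lambda>a. a \<notin> \<int>\<^sub>\<le>\<^sub>0) (at (- of_nat n :: complex))"
proof -
  have "a \<notin> \<int>\<^sub>\<le>\<^sub>0" if "a \<noteq> - of_nat n" "dist a (- of_nat n) < 1" for a :: complex
  proof
    assume "a \<in> \<int>\<^sub>\<le>\<^sub>0"
    then obtain j where j: "a = of_int j"
      by (elim nonpos_Ints_cases) auto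
    have "dist a (- of_nat n) = norm (of_int (j + int n) :: complex)"
      using j by (simp add: dist_norm)
    also have "\<dots> = \<bar>real_of_int (j + int n)\<bar>"
      by (rule norm_of_int)
    finally have "\<bar>real_of_int (j + int n)\<bar> < 1"
      using that(2) by simp
    then have "j = - int n"
      by linarith
    with that(1) j show False
      by simp
  qed
  then show ?thesis
    using eventually_at_ball'[OF zero_less_one, of "- of_nat n :: complex" UNIV]
    by (auto elim!: eventually_mono simp: dist_commute)
qed

lemma filterlim_plus_1_at_neg_nat:
  assumes "1 \<le> n"
  shows "filterlim (\<lambda>a. a + 1) (at (- of_nat (n - 1))) (at (- of_nat n :: complex))"
proof -
  have eq: "- of_nat (n - 1) = - of_nat n + (1 :: complex)"
    using assms by (simp add: of_nat_diff)
  show ?thesis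
    unfolding eq by (intro filterlim_atI tendsto_eq_intros) (auto simp: eventually_at_filter)
qed

lemma Gamma_plus_1_poles:
  assumes "1 \<le> n"
  shows "filterlim (\<lambda>a. Gamma (a + 1)) at_infinity (at (- of_nat n :: complex))"
  using filterlim_compose[OF Gamma_poles filterlim_plus_1_at_neg_nat[OF assms]] by simp

lemma Gamma_plus_1_residues:
  assumes "1 \<le> n"
  shows "((\<lambda>a. Gamma (a + 1) * (a + of_nat n)) \<longlongrightarrow> (-1) ^ (n - 1) / fact (n - 1))
           (at (- of_nat n :: complex))"
proof -
  have "a + 1 + of_nat (n - 1) = a + of_nat n" for a :: complex
    using assms by (simp add: of_nat_diff)
  then show ?thesis
    using filterlim_compose[OF Gamma_residues filterlim_plus_1_at_neg_nat[OF assms]]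
    by (simp only: o_def)
qed

section \<open>Mellin transforms of nonnegative functions\<close>

context
  fixes f :: "real \<Rightarrow> real" and \<sigma> :: real
  assumes f_measurable [measurable]: "f \<in> borel_measurable borel"
    and f_nonneg: "\<And>y. 0 < y \<Longrightarrow> 0 \<le> f y"
    and powr_f_integrable: "\<And>c. \<sigma> < c \<Longrightarrow> set_integrable lborel {0<..} (\<lambda>y. y powr c * f y)"
begin

lemma mellin_integrable:
  assumes "\<sigma> < Re a"
  shows "set_integrable lborel {0<..} (\<lambda>y. of_real y powr a * of_real (f y))"
proof (rule set_integrable_bound[OF powr_f_integrable[OF assms]])
  show "set_borel_measurable lborel {0<..} (\<lambda>y. of_real y powr a * of_real (f y) :: complex)"
    unfolding set_borel_measurable_def by measurable
  show "AE y in lborel. y \<in> {0<..} \<longrightarrow>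
          norm (of_real y powr a * of_real (f y)) \<le> norm (y powr Re a * f y)"
    using f_nonneg by (intro AE_I2) (auto simp: norm_mult norm_powr_real_powr)
qed

lemma powr_f_ln_integrable:
  assumes "\<sigma> < c"
  shows "set_integrable lborel {0<..} (\<lambda>y. y powr c * f y * ln y)"
proof -
  define d where "d = (c - \<sigma>) / 2"
  have d: "0 < d" "\<sigma> < c - d" "\<sigma> < c + d"
    using assms by (auto simp: d_def field_simps)
  have "set_integrable lborel {0<..} (\<lambda>y. (y powr (c + d) * f y + y powr (c - d) * f y) / d)"
    using d by (intro set_integrable_divide set_integral_add(1) powr_f_integrable)
  then show ?thesis
  proof (rule set_integrable_bound)
    show "set_borel_measurable lborel {0<..} (\<lambda>y. y powr c * f y * ln y)"
      unfolding set_borel_measurable_def by measurable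
    show "AE y in lborel. y \<in> {0<..} \<longrightarrow>
            norm (y powr c * f y * ln y) \<le> norm ((y powr (c + d) * f y + y powr (c - d) * f y) / d)"
    proof (intro AE_I2 impI)
      fix y :: real
      assume "y \<in> {0<..}"
      then have y: "0 < y" by simp
      have "(y powr d + y powr (- d)) * y powr c = y powr (c + d) + y powr (c - d)"
        by (simp add: algebra_simps flip: powr_add)
      moreover have "d * \<bar>ln y\<bar> * (y powr c * f y) \<le> (y powr d + y powr (- d)) * (y powr c * f y)"
        using abs_ln_le_powr_add_powr[OF y d(1)] f_nonneg[OF y] by (intro mult_right_mono) auto
      ultimately have "\<bar>ln y\<bar> * (y powr c * f y) \<le> (y powr (c + d) * f y + y powr (c - d) * f y) / d"
        using d(1) by (simp add: field_simps)
      then show "norm (y powr c * f y * ln y) \<le> norm ((y powr (c + d) * f y + y powr (c - d) * f y) / d)"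
        using f_nonneg[OF y] d(1) by (simp add: abs_mult mult_ac)
    qed
  qed
qed

lemma mellin_has_field_derivative:
  assumes a: "\<sigma> < Re a"
  shows "((\<lambda>z. LINT y:{0<..}|lborel. of_real y powr z * of_real (f y)) has_field_derivative
           (LINT y:{0<..}|lborel. of_real (ln y) * (of_real y powr a * of_real (f y)))) (at a)"
proof -
  define d where "d = (Re a - \<sigma>) / 3"
  have d: "0 < d" "\<sigma> < Re a - 2 * d"
    using a by (auto simp: d_def field_simps)
  define W where
    "W y = (2 * (y powr Re a * f y) + y powr (Re a - 2 * d) * f y + y powr (Re a + 2 * d) * f y) / d"
    for y
  show ?thesis
  proof (rule has_field_derivative_set_integral_dominated[OF d(1)])
    show "set_integrable lborel {0<..} (\<lambda>y. of_real y powr z * of_real (f y))" if "z \<in> ball a d" for z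
    proof (rule mellin_integrable)
      have "\<bar>Re z - Re a\<bar> < d"
        using that abs_Re_le_cmod[of "z - a"] by (auto simp: dist_norm norm_minus_commute)
      then show "\<sigma> < Re z"
        using d by linarith
    qed
    show "((\<lambda>z. of_real y powr z * of_real (f y)) has_field_derivative
            of_real (ln y) * (of_real y powr a * of_real (f y))) (at a)" if "y \<in> {0<..}" for y
    proof -
      have "((\<lambda>z. of_real y powr z) has_field_derivative Ln (of_real y) * of_real y powr a) (at a)"
        using that by (intro has_field_derivative_powr_right) simp
      from DERIV_cmult_right[OF this, of "of_real (f y)"] show ?thesis
        using that by (simp add: Ln_of_real mult.assoc)
    qed
    show "set_borel_measurable lborel {0<..}
            (\<lambda>y. of_real (ln y) * (of_real y powr a * of_real (f y)) :: complex)"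
      unfolding set_borel_measurable_def by measurable
    show "set_integrable lborel {0<..} W"
      unfolding W_def using d a
      by (intro set_integrable_divide set_integral_add(1) set_integrable_mult_right powr_f_integrable)
        auto
    show "norm (of_real y powr z * of_real (f y) - of_real y powr a * of_real (f y))
            \<le> W y * norm (z - a)"
      if "z \<in> ball a d" "y \<in> {0<..}" for z y
    proof -
      have "norm (of_real y powr z * of_real (f y) - of_real y powr a * of_real (f y))
              = norm (of_real y powr z - of_real y powr a) * f y"
        using f_nonneg[of y] that by (simp add: norm_mult flip: left_diff_distrib)
      also have "\<dots> \<le> (2 * y powr Re a + y powr (Re a - 2 * d) + y powr (Re a + 2 * d)) / d
                          * norm (z - a) * f y"
        using norm_of_real_powr_diff_le[of y d z a] f_nonneg[of y] that d(1)
        by (intro mult_right_mono) auto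
      also have "\<dots> = W y * norm (z - a)"
        unfolding W_def by (simp add: algebra_simps add_divide_distrib)
      finally show ?thesis .
    qed
  qed
qed

end

section \<open>Gamma integrals\<close>

lemma powr_exp_integrable:
  fixes c :: real
  assumes "-1 < c"
  shows "set_integrable lborel {0<..} (\<lambda>y. y powr c * exp (- y))"
proof -
  have "((\<lambda>t. t powr (c + 1 - 1) / exp t) has_integral Gamma (c + 1)) {0..}"
    using assms by (intro Gamma_integral_real) simp
  then have "(\<lambda>t. t powr (c + 1 - 1) / exp t) absolutely_integrable_on {0..}"
    by (intro nonnegative_absolutely_integrable_1) (auto simp: integrable_on_def)
  then have "set_integrable lborel {0..} (\<lambda>t. t powr (c + 1 - 1) / exp t)"
    unfolding set_integrable_def by (subst (asm) integrable_completion) auto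
  then have "set_integrable lborel {0<..} (\<lambda>t. t powr (c + 1 - 1) / exp t)"
    by (rule set_integrable_subset) auto
  then show ?thesis
    by (simp add: exp_minus divide_inverse)
qed

lemma Gamma_set_integral:
  fixes a :: complex
  assumes "-1 < Re a"
  shows "set_integrable lborel {0<..} (\<lambda>t. of_real t powr a * of_real (exp (- t)))"
    and "(LINT t:{0<..}|lborel. of_real t powr a * of_real (exp (- t))) = Gamma (a + 1)"
proof -
  have eq: "of_real t powr (a + 1 - 1) / of_real (exp t) = of_real t powr a * of_real (exp (- t))"
    for t :: real
    by (simp add: exp_minus divide_inverse)
  have "(\<lambda>t. of_real t powr a * of_real (exp (- t))) absolutely_integrable_on {0<..}"
    using absolutely_integrable_Gamma_integral'[of "a + 1"] assms unfolding eq by simp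
  then show int: "set_integrable lborel {0<..} (\<lambda>t. of_real t powr a * of_real (exp (- t)))"
    unfolding set_integrable_def by (subst (asm) integrable_completion) auto
  have "((\<lambda>t. of_real t powr a * of_real (exp (- t))) has_integral Gamma (a + 1)) {0<..}"
    using Gamma_integral_complex'[of "a + 1"] assms unfolding eq by simp
  then show "(LINT t:{0<..}|lborel. of_real t powr a * of_real (exp (- t))) = Gamma (a + 1)"
    using set_borel_integral_eq_integral(2)[OF int] by (simp add: integral_unique)
qed

lemma Gamma_set_integral_scaled:
  fixes a :: complex and k :: real
  assumes a: "-1 < Re a" and k: "0 < k"
  shows "set_integrable lborel {0<..} (\<lambda>y. of_real y powr a * of_real (exp (- (k * y))))"
    and "(LINT y:{0<..}|lborel. of_real y powr a * of_real (exp (- (k * y))))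
           = Gamma (a + 1) / of_real k powr (a + 1)"
proof -
  define g where "g t = of_real t powr a * of_real (exp (- t))" for t :: real
  define h where "h y = of_real y powr a * of_real (exp (- (k * y)))" for y :: real
  have rescale: "indicator {0<..} (0 + k * y) *\<^sub>R g (0 + k * y)
                   = of_real k powr a * (indicator {0<..} y *\<^sub>R h y)"
    for y
  proof (cases "0 < y")
    case True
    have "of_real (k * y) powr a = of_real k powr a * of_real y powr a"
      using k True by (simp add: powr_times_real)
    then show ?thesis
      using True k by (simp add: g_def h_def mult.assoc)
  qed (use k in \<open>simp add: zero_less_mult_iff\<close>)
  have k_powr: "of_real k powr a \<noteq> 0"
    using k by simp
  have "integrable lborel (\<lambda>y. indicator {0<..} (0 + k * y) *\<^sub>R g (0 + k * y))"
    using Gamma_set_integral(1)[OF a] k unfolding set_integrable_def g_def[symmetric]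
    by (intro lborel_integrable_real_affine) auto
  then have "integrable lborel (\<lambda>y. of_real k powr a * (indicator {0<..} y *\<^sub>R h y))"
    unfolding rescale .
  then have "integrable lborel
      (\<lambda>y. inverse (of_real k powr a) * (of_real k powr a * (indicator {0<..} y *\<^sub>R h y)))"
    by (rule integrable_mult_right)
  then show "set_integrable lborel {0<..} h"
    unfolding set_integrable_def using k_powr by (simp add: mult.assoc [symmetric])
  have "Gamma (a + 1) = (LINT t:{0<..}|lborel. g t)"
    using Gamma_set_integral(2)[OF a] by (simp add: g_def)
  also have "\<dots> = k *\<^sub>R (\<integral>y. indicator {0<..} (0 + k * y) *\<^sub>R g (0 + k * y) \<partial>lborel)"
    unfolding set_lebesgue_integral_def using k lborel_integral_real_affine[of k _ 0] by simp
  also have "\<dots> = k *\<^sub>R (of_real k powr a * (LINT y:{0<..}|lborel. h y))"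
    unfolding rescale set_lebesgue_integral_def by (simp only: integral_mult_right_zero)
  also have "\<dots> = of_real k powr (a + 1) * (LINT y:{0<..}|lborel. h y)"
    using k by (simp add: powr_add scaleR_conv_of_real mult_ac)
  finally have "Gamma (a + 1) = of_real k powr (a + 1) * (LINT y:{0<..}|lborel. h y)" .
  moreover have "of_real k powr (a + 1) \<noteq> 0"
    using k by simp
  ultimately show "(LINT y:{0<..}|lborel. h y) = Gamma (a + 1) / of_real k powr (a + 1)"
    by (simp add: eq_divide_eq mult.commute)
qed

section \<open>The integral \<open>I\<close> and the binomial Dirichlet sum\<close>

definition I_weight :: "nat \<Rightarrow> real \<Rightarrow> real" where
  "I_weight m y = exp (- y) * (1 - exp (- y)) ^ (m - 1)"

lemma I_integrand_eq: "I_integrand a m y = of_real y powr a * of_real (I_weight m y)"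
  unfolding I_integrand_def I_weight_def by (simp add: mult.assoc)

lemma I_fun_eq_mellin:
  "I_fun a m = of_nat m * (LINT y:{0<..}|lborel. of_real y powr a * of_real (I_weight m y))"
  unfolding I_fun_def I_integrand_eq ..

lemma I_weight_measurable [measurable]: "I_weight m \<in> borel_measurable borel"
  unfolding I_weight_def by measurable

lemma I_weight_nonneg: "0 \<le> y \<Longrightarrow> 0 \<le> I_weight m y"
  unfolding I_weight_def by simp

lemma I_weight_le:
  assumes "0 < m" "0 < y"
  shows "I_weight m y \<le> y powr (real m - 1) * exp (- y)"
proof -
  have "1 - exp (- y) \<le> y"
    using exp_ge_add_one_self[of "- y"] by linarith
  then have "(1 - exp (- y)) ^ (m - 1) \<le> y ^ (m - 1)"
    using assms by (intro power_mono) auto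
  also have "\<dots> = y powr real (m - 1)"
    using assms(2) by (rule powr_realpow[symmetric])
  also have "real (m - 1) = real m - 1"
    using assms by simp
  finally show ?thesis
    unfolding I_weight_def by (simp add: mult.commute mult_left_mono)
qed

lemma I_weight_Suc_eq_sum:
  "I_weight (Suc n) y = (\<Sum>j\<le>n. (-1) ^ j * real (n choose j) * exp (- (real (Suc j) * y)))"
proof -
  have power: "exp (- y) * (- exp (- y)) ^ j = (-1) ^ j * exp (- (real (Suc j) * y))" for j
  proof -
    have "(- exp (- y)) ^ j = (-1) ^ j * exp (real j * (- y))"
      by (subst power_minus) (simp only: exp_of_nat_mult)
    moreover have "exp (- y) * exp (real j * (- y)) = exp (- (real (Suc j) * y))"
      by (simp add: algebra_simps flip: exp_add)
    ultimately show ?thesis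
      by (metis mult.left_commute)
  qed
  have "I_weight (Suc n) y = exp (- y) * (\<Sum>j\<le>n. real (n choose j) * (- exp (- y)) ^ j)"
    unfolding I_weight_def using binomial_ring[of "- exp (- y)" 1 n] by simp
  also have "\<dots> = (\<Sum>j\<le>n. real (n choose j) * (exp (- y) * (- exp (- y)) ^ j))"
    by (simp add: sum_distrib_left mult.left_commute)
  also have "\<dots> = (\<Sum>j\<le>n. (-1) ^ j * real (n choose j) * exp (- (real (Suc j) * y)))"
    unfolding power by (simp add: mult_ac)
  finally show ?thesis .
qed

lemma powr_I_weight_integrable:
  assumes m: "0 < m" and c: "- real m < c"
  shows "set_integrable lborel {0<..} (\<lambda>y. y powr c * I_weight m y)"
proof (rule set_integrable_bound[OF powr_exp_integrable])
  show "-1 < c + real m - 1"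
    using c by simp
  show "set_borel_measurable lborel {0<..} (\<lambda>y. y powr c * I_weight m y)"
    unfolding set_borel_measurable_def by measurable
  show "AE y in lborel. y \<in> {0<..} \<longrightarrow>
          norm (y powr c * I_weight m y) \<le> norm (y powr (c + real m - 1) * exp (- y))"
  proof (intro AE_I2 impI)
    fix y :: real
    assume "y \<in> {0<..}"
    then have y: "0 < y" by simp
    have "y powr c * I_weight m y \<le> y powr c * (y powr (real m - 1) * exp (- y))"
      using I_weight_le[OF m y] by (intro mult_left_mono) auto
    also have "\<dots> = y powr (c + real m - 1) * exp (- y)"
      by (simp add: mult.assoc powr_add[symmetric] add_diff_eq)
    finally show "norm (y powr c * I_weight m y) \<le> norm (y powr (c + real m - 1) * exp (- y))"
      using y I_weight_nonneg[of y m] by simp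
  qed
qed

definition binomial_dirichlet_sum :: "nat \<Rightarrow> complex \<Rightarrow> complex" where
  "binomial_dirichlet_sum m a =
     (\<Sum>k=1..m. (-1) ^ (k - 1) * of_nat (m choose k) * (1 / (of_nat k powr a)))"

lemma binomial_dirichlet_sum_has_field_derivative:
  "(binomial_dirichlet_sum m has_field_derivative
     (\<Sum>k=1..m. (-1) ^ k * of_nat (m choose k) * (of_real (ln (real k)) / of_nat k powr a))) (at a)"
  unfolding binomial_dirichlet_sum_def[abs_def]
proof (intro DERIV_sum)
  fix k
  assume k: "k \<in> {1..m}"
  have eq: "(-1) ^ (k - 1) * of_nat (m choose k) * (- Ln (of_nat k) / of_nat k powr a)
          = ((-1) ^ k * of_nat (m choose k) * (of_real (ln (real k)) / of_nat k powr a) :: complex)"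
  proof -
    obtain j where "k = Suc j"
      using k by (cases k) auto
    then show ?thesis
      by (simp add: Ln_of_nat del: of_nat_Suc)
  qed
  show "((\<lambda>z. (-1) ^ (k - 1) * of_nat (m choose k) * (1 / of_nat k powr z)) has_field_derivative
          (-1) ^ k * of_nat (m choose k) * (of_real (ln (real k)) / of_nat k powr a)) (at a)"
  proof (rule DERIV_cong[OF DERIV_cmult[OF has_field_derivative_inverse_powr_right] eq])
    show "(of_nat k :: complex) \<noteq> 0"
      using k by simp
  qed
qed

lemma binomial_dirichlet_sum_holomorphic: "binomial_dirichlet_sum m holomorphic_on A"
  unfolding holomorphic_on_def field_differentiable_def
  using binomial_dirichlet_sum_has_field_derivative has_field_derivative_at_within by blast

lemma binomial_dirichlet_sum_0:
  assumes "0 < m"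
  shows "binomial_dirichlet_sum m 0 = 1"
proof -
  have "binomial_dirichlet_sum m 0 = (\<Sum>k=1..m. (-1) ^ (k - 1) * of_nat (m choose k))"
    unfolding binomial_dirichlet_sum_def by (rule sum.cong) auto
  also have "\<dots> = - (\<Sum>k=1..m. (-1) ^ k * of_nat (m choose k))"
    unfolding sum_negf[symmetric]
  proof (rule sum.cong[OF refl])
    fix k
    assume "k \<in> {1..m}"
    then obtain j where "k = Suc j"
      by (cases k) auto
    then show "(-1) ^ (k - 1) * of_nat (m choose k) = - ((-1) ^ k * (of_nat (m choose k) :: complex))"
      by simp
  qed
  also have "(\<Sum>k=1..m. (-1) ^ k * of_nat (m choose k))
               = (\<Sum>k\<le>m. (-1) ^ k * of_nat (m choose k)) - (1 :: complex)"
    by (simp add: atMost_atLeast0 sum.atLeast_Suc_atMost)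
  also have "(\<Sum>k\<le>m. (-1) ^ k * of_nat (m choose k) :: complex) = 0"
    using choose_alternating_sum[OF assms] by simp
  finally show ?thesis
    by simp
qed

lemma mellin_I_weight:
  assumes m: "0 < m" and a: "-1 < Re a"
  shows "of_nat m * (LINT y:{0<..}|lborel. of_real y powr a * of_real (I_weight m y))
           = Gamma (a + 1) * binomial_dirichlet_sum m a"
proof -
  obtain n where n: "m = Suc n"
    using m by (cases m) auto
  define c where "c j = ((-1) ^ j * of_nat (n choose j) :: complex)" for j :: nat
  define E where "E j y = of_real y powr a * of_real (exp (- (real (Suc j) * y)))" for j :: nat and y
  have E: "set_integrable lborel {0<..} (E j)"
    "(LINT y:{0<..}|lborel. E j y) = Gamma (a + 1) / of_nat (Suc j) powr (a + 1)" for j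
    using Gamma_set_integral_scaled[OF a, of "real (Suc j)"] unfolding E_def by simp_all
  have "of_real y powr a * of_real (I_weight m y) = (\<Sum>j\<le>n. c j * E j y)" for y
    unfolding n I_weight_Suc_eq_sum c_def E_def by (simp add: sum_distrib_left mult_ac)
  then have "(LINT y:{0<..}|lborel. of_real y powr a * of_real (I_weight m y))
               = (\<Sum>j\<le>n. c j * (LINT y:{0<..}|lborel. E j y))"
    using E(1) by (simp add: set_integral_sum)
  also have "\<dots> = Gamma (a + 1) * (\<Sum>j\<le>n. c j / of_nat (Suc j) powr (a + 1))"
    unfolding E(2) by (simp add: sum_distrib_left mult_ac)
  finally have "of_nat m * (LINT y:{0<..}|lborel. of_real y powr a * of_real (I_weight m y))
                  = Gamma (a + 1) * (\<Sum>j\<le>n. of_nat m * c j / of_nat (Suc j) powr (a + 1))"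
    by (simp add: sum_distrib_left mult_ac)
  also have "(\<Sum>j\<le>n. of_nat m * c j / of_nat (Suc j) powr (a + 1))
               = (\<Sum>j<m. (-1) ^ (Suc j - 1) * of_nat (m choose Suc j) * (1 / of_nat (Suc j) powr a))"
    unfolding n lessThan_Suc_atMost
  proof (rule sum.cong[OF refl])
    fix j
    define K where "K = (of_nat (Suc n) :: complex)"
    define N where "N = (of_nat (Suc j) :: complex)"
    define C where "C = (of_nat (n choose j) :: complex)"
    define C' where "C' = (of_nat (Suc n choose Suc j) :: complex)"
    have N: "N \<noteq> 0"
      unfolding N_def by (simp del: of_nat_Suc)
    have binom: "K * C = C' * N"
      unfolding K_def C_def C'_def N_def by (metis Suc_times_binomial_eq of_nat_mult)
    have powr: "N powr (a + 1) = N powr a * N"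
      by (simp add: powr_add)
    have "K * c j / N powr (a + 1) = (-1) ^ j * (K * C) / (N powr a * N)"
      unfolding c_def C_def[symmetric] powr by (simp add: mult_ac)
    also have "\<dots> = (-1) ^ j * C' * (1 / N powr a)"
      unfolding binom using N by simp
    finally show "of_nat (Suc n) * c j / of_nat (Suc j) powr (a + 1)
        = (-1) ^ (Suc j - 1) * of_nat (Suc n choose Suc j) * (1 / of_nat (Suc j) powr a)"
      by (simp only: K_def N_def C'_def diff_Suc_1)
  qed
  also have "\<dots> = binomial_dirichlet_sum m a"
    unfolding binomial_dirichlet_sum_def by (simp only: One_nat_def sum.atLeast1_atMost_eq)
  finally show ?thesis .
qed

lemma I_fun_has_field_derivative:
  assumes "0 < m" "- real m < Re a"
  shows "((\<lambda>z. I_fun z m) has_field_derivative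
           of_nat m *
             (LINT y:{0<..}|lborel. of_real (ln y) * (of_real y powr a * of_real (I_weight m y))))
         (at a)"
  unfolding I_fun_eq_mellin
  using assms by (intro DERIV_cmult mellin_has_field_derivative[where \<sigma> = "- real m"])
    (auto intro: powr_I_weight_integrable I_weight_nonneg)

lemma I_fun_holomorphic:
  assumes "0 < m"
  shows "(\<lambda>a. I_fun a m) holomorphic_on {a. - real m < Re a}"
  unfolding holomorphic_on_open[OF open_halfspace_Re_gt]
  using I_fun_has_field_derivative[OF assms] by blast

lemma I_integrand_integrable:
  assumes "0 < m" "- real m < Re a"
  shows "set_integrable lborel {0<..} (I_integrand a m)"
  unfolding I_integrand_eq using assms
  by (intro mellin_integrable[where \<sigma> = "- real m"])
    (auto intro: powr_I_weight_integrable I_weight_nonneg)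

lemma I_fun_eq_Gamma_mult_binomial_dirichlet_sum:
  assumes m: "0 < m" and a: "- real m < Re a" "a \<notin> \<int>\<^sub>\<le>\<^sub>0"
  shows "I_fun a m = Gamma (a + 1) * binomial_dirichlet_sum m a"
proof (rule analytic_continuation_open[where s = "{a. 0 < Re a}"
      and s' = "{a. - real m < Re a} - \<int>\<^sub>\<le>\<^sub>0" and f = "\<lambda>a. I_fun a m"])
  show "open {a. 0 < Re a}" "open ({a. - real m < Re a} - \<int>\<^sub>\<le>\<^sub>0)"
    by (intro open_Diff open_halfspace_Re_gt closed_nonpos_Ints)+
  show "{a. 0 < Re a} \<noteq> {}"
    by (metis Re_complex_of_real empty_Collect_eq zero_less_one)
  show "connected ({a. - real m < Re a} - \<int>\<^sub>\<le>\<^sub>0)"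
  proof (rule connected_open_diff_countable)
    show "countable (\<int>\<^sub>\<le>\<^sub>0 :: complex set)"
      using countable_int nonpos_Ints_subset_Ints countable_subset by blast
  qed (auto intro: open_halfspace_Re_gt convex_connected convex_halfspace_Re_gt)
  show "{a. 0 < Re a} \<subseteq> {a. - real m < Re a} - \<int>\<^sub>\<le>\<^sub>0"
    by (auto elim!: nonpos_Ints_cases)
  show "(\<lambda>a. I_fun a m) holomorphic_on {a. - real m < Re a} - \<int>\<^sub>\<le>\<^sub>0"
    using I_fun_holomorphic[OF m] by (rule holomorphic_on_subset) auto
  show "(\<lambda>a. Gamma (a + 1) * binomial_dirichlet_sum m a) holomorphic_on {a. - real m < Re a} - \<int>\<^sub>\<le>\<^sub>0"
    by (auto intro!: holomorphic_intros binomial_dirichlet_sum_holomorphic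
        dest: plus_one_in_nonpos_Ints_imp)
  show "I_fun a m = Gamma (a + 1) * binomial_dirichlet_sum m a" if "a \<in> {a. 0 < Re a}" for a
    using mellin_I_weight[OF m, of a] that unfolding I_fun_eq_mellin by simp
  show "a \<in> {a. - real m < Re a} - \<int>\<^sub>\<le>\<^sub>0"
    using a by auto
qed

lemma eventually_I_fun_eq_Gamma_mult_at_neg_nat:
  assumes m: "0 < m" and n: "n < m"
  shows "eventually (\<lambda>a. I_fun a m = Gamma (a + 1) * binomial_dirichlet_sum m a) (at (- of_nat n))"
proof -
  have "eventually (\<lambda>a. a \<in> ball (- of_nat n) 1) (at (- of_nat n :: complex))"
    by (rule eventually_at_in_open') auto
  with eventually_not_in_nonpos_Ints_at_neg_nat[of n] show ?thesis
  proof eventually_elim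
    case (elim a)
    then have "\<bar>Re a + real n\<bar> < 1"
      using abs_Re_le_cmod[of "a + of_nat n"] by (auto simp: dist_norm norm_minus_commute)
    then have "- real m < Re a"
      using n by linarith
    then show ?case
      using I_fun_eq_Gamma_mult_binomial_dirichlet_sum[OF m] elim by simp
  qed
qed

lemma binomial_dirichlet_sum_neg_nat:
  assumes m: "0 < m" and n: "n \<in> {1..m - 1}"
  shows "binomial_dirichlet_sum m (- of_nat n) = 0"
proof (rule limit_0_if_pole_mult_tendsto)
  show "filterlim (\<lambda>a. Gamma (a + 1)) at_infinity (at (- of_nat n :: complex))"
    using n by (intro Gamma_plus_1_poles) simp
  show "(binomial_dirichlet_sum m \<longlongrightarrow> binomial_dirichlet_sum m (- of_nat n)) (at (- of_nat n))"
    using DERIV_isCont[OF binomial_dirichlet_sum_has_field_derivative] by (simp add: isCont_def)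
  have "- real m < Re (- of_nat n :: complex)"
    using n by auto
  then have "((\<lambda>a. I_fun a m) \<longlongrightarrow> I_fun (- of_nat n) m) (at (- of_nat n))"
    using DERIV_isCont[OF I_fun_has_field_derivative[OF m]] by (simp add: isCont_def)
  moreover have "n < m"
    using n by auto
  ultimately show "((\<lambda>a. Gamma (a + 1) * binomial_dirichlet_sum m a) \<longlongrightarrow> I_fun (- of_nat n) m)
                     (at (- of_nat n))"
    by (simp add: tendsto_cong[OF eventually_I_fun_eq_Gamma_mult_at_neg_nat[OF m]])
qed simp

lemma I_fun_at_neg_nat:
  assumes m: "0 < m" and n: "n \<in> {1..m - 1}"
  shows "I_fun (- of_nat n) m = complex_of_real
           ((-1) ^ (n - 1) / fact (n - 1) *
            (\<Sum>k=1..m. (-1) ^ k * real (m choose k) * real k ^ n * ln (real k)))"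
proof -
  define z :: complex where "z = - of_nat n"
  define c :: complex where "c = (-1) ^ (n - 1) / fact (n - 1)"
  define S' where
    "S' = (\<Sum>k=1..m. (-1) ^ k * of_nat (m choose k) * (of_real (ln (real k)) / of_nat k powr z))"
  have "((\<lambda>a. Gamma (a + 1) * (a - z)) \<longlongrightarrow> c) (at z)"
    using Gamma_plus_1_residues[of n] n by (simp add: z_def c_def)
  then have "((\<lambda>a. Gamma (a + 1) * binomial_dirichlet_sum m a) \<longlongrightarrow> c * S') (at z)"
    using binomial_dirichlet_sum_has_field_derivative binomial_dirichlet_sum_neg_nat[OF m n]
    unfolding S'_def z_def by (intro tendsto_mult_at_simple_pole)
  moreover have "n < m"
    using n by auto
  ultimately have "((\<lambda>a. I_fun a m) \<longlongrightarrow> c * S') (at z)"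
    unfolding z_def by (simp add: tendsto_cong[OF eventually_I_fun_eq_Gamma_mult_at_neg_nat[OF m]])
  moreover have "- real m < Re z"
    using n by (auto simp: z_def)
  then have "((\<lambda>a. I_fun a m) \<longlongrightarrow> I_fun z m) (at z)"
    using DERIV_isCont[OF I_fun_has_field_derivative[OF m]] by (simp add: isCont_def)
  ultimately have "I_fun z m = c * S'"
    by (rule tendsto_unique[OF at_neq_bot, rotated])
  also have "S' = of_real (\<Sum>k=1..m. (-1) ^ k * real (m choose k) * real k ^ n * ln (real k))"
    unfolding S'_def of_real_sum
  proof (rule sum.cong[OF refl])
    fix k
    assume "k \<in> {1..m}"
    then have "of_nat k powr z = inverse (of_nat k ^ n)"
      by (simp add: z_def powr_minus)
    then show "(-1) ^ k * of_nat (m choose k) * (of_real (ln (real k)) / of_nat k powr z)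
        = of_real ((-1) ^ k * real (m choose k) * real k ^ n * ln (real k))"
      by (simp add: divide_inverse mult_ac)
  qed
  finally show ?thesis
    unfolding z_def c_def by simp
qed

lemma I_weight_ln_integrable:
  assumes "0 < m"
  shows "set_integrable lborel {0<..} (\<lambda>y::real. exp (- y) * (1 - exp (- y)) ^ (m - 1) * ln y)"
proof -
  have "set_integrable lborel {0<..} (\<lambda>y. y powr 0 * I_weight m y * ln y)"
    using assms by (intro powr_f_ln_integrable[where \<sigma> = "- real m"])
      (auto intro: powr_I_weight_integrable I_weight_nonneg)
  moreover have "(\<lambda>y. indicator {0<..} y *\<^sub>R (y powr 0 * I_weight m y * ln y))
      = (\<lambda>y. indicator {0<..} y *\<^sub>R (exp (- y) * (1 - exp (- y)) ^ (m - 1) * ln y))"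
    by (auto simp: I_weight_def indicator_def)
  ultimately show ?thesis
    unfolding set_integrable_def by (simp only:)
qed

lemma I_fun_has_field_derivative_0:
  assumes "0 < m"
  shows "((\<lambda>a. I_fun a m) has_field_derivative
           complex_of_real
             (real m * (LINT y:{0<..}|lborel. exp (- (y::real)) * (1 - exp (- y)) ^ (m - 1) * ln y)))
         (at 0)"
proof -
  have "(LINT y:{0<..}|lborel. of_real (ln y) * (of_real y powr 0 * of_real (I_weight m y)))
          = (LINT y:{0<..}|lborel. complex_of_real (exp (- y) * (1 - exp (- y)) ^ (m - 1) * ln y))"
    by (rule set_lebesgue_integral_cong) (auto simp: I_weight_def)
  also have "\<dots> = of_real (LINT y:{0<..}|lborel. exp (- y) * (1 - exp (- y)) ^ (m - 1) * ln y)"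
    by (rule set_integral_complex_of_real)
  finally show ?thesis
    using I_fun_has_field_derivative[OF assms, of 0] assms by simp
qed

lemma Gamma_mult_binomial_dirichlet_sum_has_field_derivative_0:
  assumes m: "0 < m"
  shows "((\<lambda>a. Gamma (a + 1) * binomial_dirichlet_sum m a) has_field_derivative
           of_real (- euler_mascheroni - (\<Sum>k=1..m. (-1) ^ (k - 1) * real (m choose k) * ln (real k))))
         (at 0)"
proof -
  define S' where "S' = (\<Sum>k=1..m. (-1) ^ k * of_nat (m choose k) *
                            (of_real (ln (real k)) / of_nat k powr (0 :: complex)))"
  have "(Gamma has_field_derivative Gamma 1 * Digamma 1) (at ((0 :: complex) + 1))"
    using has_field_derivative_Gamma[of "1 :: complex" UNIV] by simp
  moreover have "((\<lambda>a. a + 1) has_field_derivative 1) (at (0 :: complex))"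
    by (auto intro!: derivative_eq_intros)
  ultimately have "((\<lambda>a. Gamma (a + 1)) has_field_derivative Gamma 1 * Digamma 1 * 1)
                     (at (0 :: complex))"
    by (rule DERIV_chain2)
  then have "((\<lambda>a. Gamma (a + 1) * binomial_dirichlet_sum m a) has_field_derivative
                Gamma 1 * Digamma 1 * 1 * binomial_dirichlet_sum m 0 + S' * Gamma (0 + 1)) (at 0)"
    unfolding S'_def by (rule DERIV_mult[OF _ binomial_dirichlet_sum_has_field_derivative])
  moreover have "S' = - of_real (\<Sum>k=1..m. (-1) ^ (k - 1) * real (m choose k) * ln (real k))"
    unfolding S'_def of_real_sum sum_negf[symmetric]
  proof (rule sum.cong[OF refl])
    fix k
    assume "k \<in> {1..m}"
    then obtain j where "k = Suc j"
      by (cases k) auto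
    then show "(-1) ^ k * of_nat (m choose k) * (of_real (ln (real k)) / of_nat k powr (0 :: complex))
        = - of_real ((-1) ^ (k - 1) * real (m choose k) * ln (real k))"
      by (simp del: of_nat_Suc)
  qed
  ultimately show ?thesis
    using binomial_dirichlet_sum_0[OF m] by simp
qed

lemma I_weight_ln_integral:
  assumes m: "0 < m"
  shows "real m * (LINT y:{0<..}|lborel. exp (- (y::real)) * (1 - exp (- y)) ^ (m - 1) * ln y)
           = - euler_mascheroni - (\<Sum>k=1..m. (-1) ^ (k - 1) * real (m choose k) * ln (real k))"
proof -
  have "((\<lambda>a. Gamma (a + 1) * binomial_dirichlet_sum m a) has_field_derivative
          complex_of_real
            (real m * (LINT y:{0<..}|lborel. exp (- (y::real)) * (1 - exp (- y)) ^ (m - 1) * ln y)))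
        (at 0)"
  proof (rule has_field_derivative_transform_within_open[OF I_fun_has_field_derivative_0[OF m],
        of "ball 0 1"])
    show "I_fun a m = Gamma (a + 1) * binomial_dirichlet_sum m a" if "a \<in> ball 0 1" for a
    proof -
      have "\<bar>Re a\<bar> < 1"
        using that abs_Re_le_cmod[of a] by simp
      then show ?thesis
        using mellin_I_weight[OF m, of a] unfolding I_fun_eq_mellin by simp
    qed
  qed auto
  from DERIV_unique[OF this Gamma_mult_binomial_dirichlet_sum_has_field_derivative_0[OF m]]
  show ?thesis
    by (simp only: of_real_eq_iff)
qed

theorem lemma1:
  fixes m :: nat
  assumes "m > 0"
  shows
    "(\<forall>\<alpha>::complex. \<alpha> \<notin> \<int>\<^sub>\<le>\<^sub>0 \<and> Re (of_nat m + \<alpha>) > 0 \<longrightarrow>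
        set_integrable lborel {0<..} (I_integrand \<alpha> m) \<and>
        I_fun \<alpha> m = Gamma (\<alpha> + 1) *
          (\<Sum>k=1..m. (-1) ^ (k - 1) * of_nat (m choose k) * (1 / (of_nat k powr \<alpha>))))
   \<and> (\<forall>n\<in>{1..m-1}.
        I_fun (- of_nat n) m = complex_of_real
          ((-1) ^ (n - 1) / fact (n - 1) *
           (\<Sum>k=1..m. (-1) ^ k * real (m choose k) * real k ^ n * ln (real k))))
   \<and> (set_integrable lborel {0<..}
          (\<lambda>y::real. exp (- y) * (1 - exp (- y)) ^ (m - 1) * ln y)
      \<and> ((\<lambda>\<alpha>. I_fun \<alpha> m) has_field_derivative
          complex_of_real (real m * (LINT y:{0<..}|lborel. exp (- y) * (1 - exp (- y)) ^ (m - 1) * ln y)))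
         (at 0)
      \<and> real m * (LINT y:{0<..}|lborel. exp (- y) * (1 - exp (- y)) ^ (m - 1) * ln y)
          = - euler_mascheroni - (\<Sum>k=1..m. (-1) ^ (k - 1) * real (m choose k) * ln (real k)))"
proof -
  have "set_integrable lborel {0<..} (I_integrand \<alpha> m) \<and>
      I_fun \<alpha> m = Gamma (\<alpha> + 1) *
        (\<Sum>k=1..m. (-1) ^ (k - 1) * of_nat (m choose k) * (1 / (of_nat k powr \<alpha>)))"
    if "\<alpha> \<notin> \<int>\<^sub>\<le>\<^sub>0 \<and> Re (of_nat m + \<alpha>) > 0" for \<alpha> :: complex
    using that assms unfolding binomial_dirichlet_sum_def[symmetric]
    by (auto intro: I_integrand_integrable I_fun_eq_Gamma_mult_binomial_dirichlet_sum)
  then show ?thesis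
    using I_fun_at_neg_nat[OF assms] I_weight_ln_integrable[OF assms]
      I_fun_has_field_derivative_0[OF assms] I_weight_ln_integral[OF assms]
    by blast
qed

end
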